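(* Let $G$ be a finite, simple, connected graph on $n$ vertices with $m$ edges, adjacency entries $a_{uv}$ and degrees $d_u$, and let $0=\mathfrak{c}_0<\mathfrak{c}_1\le\dots\le\mathfrak{c}_{n-1}$ be the eigenvalues of its renormalized Laplacian $\hat H=\mathrm{Deg}^{-1/2}(\mathrm{Deg}-A)\mathrm{Deg}^{-1/2}$. Let $k\ge1$ be an integer and let $\mathfrak{M}_0$ be a set of ordered pairs $(u,v)$ of distinct vertices such that $\sum_{(u,v)\in\mathfrak{M}_0}(d_u+d_v)\ge 4(k-1)m$. Then $$\sum_{j=1}^{k-1}\mathfrak{c}_j\le \frac{1}{4m}\sum_{(u,v)\in\mathfrak{M}_0}\big(d_u+d_v+2a_{uv}\big)$$ and $$\sum_{j=1}^{k-1}\mathfrak{c}_j^2\le \frac{1}{4m}\sum_{(u,v)\in\mathfrak{M}_0}\Big(d_u+d_v+4a_{uv}+\sum_{x}\frac{1}{d_x}\Big(a_{xv}\sqrt{\tfrac{d_u}{d_v}}-a_{xu}\sqrt{\tfrac{d_v}{d_u}}\Big)^2\Big),$$ where $x$ ranges over all vertices.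
   Context: $A=(a_{uv})$ is the adjacency matrix ($a_{uv}=1$ if $u,v$ adjacent, else $0$), $\mathrm{Deg}$ the diagonal matrix of degrees; eigenvalues of $\hat H$ are listed with multiplicity in nondecreasing order, indexed from $0$. *)

theory Defs
  imports "Jordan_Normal_Form.Char_Poly" "HOL-Library.Multiset" "HOL-Computational_Algebra.Polynomial"
begin

definition simple_graph :: "nat \<Rightarrow> (nat \<Rightarrow> nat \<Rightarrow> bool) \<Rightarrow> bool" where
  "simple_graph n E \<longleftrightarrow> (\<forall>u v. E u v \<longrightarrow> u < n \<and> v < n) \<and>
     (\<forall>u v. E u v \<longrightarrow> E v u) \<and> (\<forall>u. \<not> E u u)"

definition connected_graph :: "nat \<Rightarrow> (nat \<Rightarrow> nat \<Rightarrow> bool) \<Rightarrow> bool" where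
  "connected_graph n E \<longleftrightarrow> (\<forall>u<n. \<forall>v<n. E\<^sup>*\<^sup>* u v)"

definition adj :: "(nat \<Rightarrow> nat \<Rightarrow> bool) \<Rightarrow> nat \<Rightarrow> nat \<Rightarrow> real" where
  "adj E u v = (if E u v then 1 else 0)"

definition deg :: "nat \<Rightarrow> (nat \<Rightarrow> nat \<Rightarrow> bool) \<Rightarrow> nat \<Rightarrow> nat" where
  "deg n E u = card {v. v < n \<and> E u v}"

definition num_edges :: "nat \<Rightarrow> (nat \<Rightarrow> nat \<Rightarrow> bool) \<Rightarrow> nat" where
  "num_edges n E = card {(u, v). u < v \<and> v < n \<and> E u v}"

definition adj_matrix :: "nat \<Rightarrow> (nat \<Rightarrow> nat \<Rightarrow> bool) \<Rightarrow> real mat" where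
  "adj_matrix n E = mat n n (\<lambda>(i, j). adj E i j)"

definition deg_matrix :: "nat \<Rightarrow> (nat \<Rightarrow> nat \<Rightarrow> bool) \<Rightarrow> real mat" where
  "deg_matrix n E = mat n n (\<lambda>(i, j). if i = j then real (deg n E i) else 0)"

definition deg_inv_sqrt_matrix :: "nat \<Rightarrow> (nat \<Rightarrow> nat \<Rightarrow> bool) \<Rightarrow> real mat" where
  "deg_inv_sqrt_matrix n E =
     mat n n (\<lambda>(i, j). if i = j then 1 / sqrt (real (deg n E i)) else 0)"

definition renorm_laplacian :: "nat \<Rightarrow> (nat \<Rightarrow> nat \<Rightarrow> bool) \<Rightarrow> real mat" where
  "renorm_laplacian n E =
     deg_inv_sqrt_matrix n E * (deg_matrix n E - adj_matrix n E) * deg_inv_sqrt_matrix n E"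

definition eigenvalues_sorted :: "real mat \<Rightarrow> real list" where
  "eigenvalues_sorted M = sorted_list_of_multiset (proots (char_poly M))"

end

theory Submission
  imports Defs "Jordan_Normal_Form.Schur_Decomposition"
    "HOL-Computational_Algebra.Fundamental_Theorem_Algebra" "HOL-Combinatorics.List_Permutation"
begin

text \<open>Let \<open>\<psi>\<close> be the unit vector proportional to \<open>(sqrt d_u)_u\<close>, which spans the kernel of
  \<open>\<hat>H\<close>, and for a pair \<open>(u, v)\<close> let \<open>F_uv = sqrt d_v e_u - sqrt d_u e_v\<close>, a vector orthogonal to
  \<open>\<psi>\<close>. Take an orthonormal eigenbasis \<open>q_0 = \<psi>, q_1, ..., q_(n-1)\<close> of \<open>\<hat>H\<close> with eigenvalues
  \<open>\<mu>_i \<ge> 0\<close> and weights \<open>w_i = \<Sum>_(u,v)\<in>M\<^sub>0 \<langle>q_i, F_uv\<rangle>\<^sup>2 / 4m\<close>. Then \<open>w_0 = 0\<close>;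
  \<open>w_i \<le> 1\<close> because \<open>\<Sum>_u,v \<langle>y, F_uv\<rangle>\<^sup>2 \<le> 4m\<close> for every unit vector \<open>y\<close>; and
  \<open>\<Sum>_i w_i \<ge> k - 1\<close> by Parseval and the hypothesis on \<open>M\<^sub>0\<close>. Weights in \<open>[0, 1]\<close> of total mass at least
  \<open>k - 1\<close> that vanish on \<open>q_0\<close> give
  \<open>\<Sum>_(j=1..k-1) f(c_j) \<le> \<Sum>_i f(\<mu>_i) w_i\<close> for every nondecreasing nonnegative \<open>f\<close>. For
  \<open>f(x) = x\<close> and \<open>f(x) = x\<^sup>2\<close> the right-hand side is \<open>\<Sum> \<langle>F_uv, \<hat>H F_uv\<rangle> / 4m\<close> resp.
  \<open>\<Sum> \<parallel>\<hat>H F_uv\<parallel>\<^sup>2 / 4m\<close>, which evaluate to the two bounds.\<close>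

section \<open>Orthonormal families and symmetric matrices\<close>

text \<open>Vectors and matrices of size \<open>n\<close> are functions on indices below \<open>n\<close>; \<open>q i\<close> is the
  \<open>i\<close>-th vector of a family.\<close>

definition orthonormal_family :: "nat \<Rightarrow> (nat \<Rightarrow> nat \<Rightarrow> real) \<Rightarrow> bool" where
  "orthonormal_family n q \<longleftrightarrow>
     (\<forall>i<n. \<forall>j<n. (\<Sum>u<n. q i u * q j u) = (if i = j then 1 else 0))"

definition symmetric_on :: "nat \<Rightarrow> (nat \<Rightarrow> nat \<Rightarrow> real) \<Rightarrow> bool" where
  "symmetric_on n h \<longleftrightarrow> (\<forall>u<n. \<forall>v<n. h u v = h v u)"

definition eigenbasis ::
    "nat \<Rightarrow> (nat \<Rightarrow> nat \<Rightarrow> real) \<Rightarrow> (nat \<Rightarrow> nat \<Rightarrow> real) \<Rightarrow> (nat \<Rightarrow> real) \<Rightarrow> bool" where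
  "eigenbasis n h q mu \<longleftrightarrow> orthonormal_family n q \<and>
     (\<forall>i<n. \<forall>u<n. (\<Sum>w<n. h u w * q i w) = mu i * q i u)"

lemma orthonormal_family_transpose:
  assumes "orthonormal_family n q"
  shows "orthonormal_family n (\<lambda>u i. q i u)"
proof -
  define W where "W = mat n n (\<lambda>(u, i). q i u)"
  have W: "W \<in> carrier_mat n n" "transpose_mat W \<in> carrier_mat n n" unfolding W_def by auto
  have "transpose_mat W * W = 1\<^sub>m n"
    using assms
    by (intro eq_matI) (auto simp: orthonormal_family_def W_def scalar_prod_def lessThan_atLeast0)
  then have WWt: "W * transpose_mat W = 1\<^sub>m n"
    by (rule mat_mult_left_right_inverse[OF W(2) W(1)])
  show ?thesis unfolding orthonormal_family_def
  proof (intro allI impI)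
    fix u u' assume u: "u < n" and u': "u' < n"
    then have "(W * transpose_mat W) $$ (u, u') = (\<Sum>i<n. q i u * q i u')"
      by (auto simp: W_def scalar_prod_def lessThan_atLeast0)
    with u u' show "(\<Sum>i<n. q i u * q i u') = (if u = u' then 1 else 0)"
      unfolding WWt by simp
  qed
qed

lemma conjugate_real_vec [simp]: "conjugate (v :: real vec) = v"
  by (rule eq_vecI) auto

lemma unit_vector_extends_to_orthonormal_family:
  fixes v :: "nat \<Rightarrow> real"
  assumes v1: "(\<Sum>u<n. v u * v u) = 1"
  shows "\<exists>w. (\<forall>u<n. w 0 u = v u) \<and> orthonormal_family n w"
proof -
  define vv where "vv = vec n v"
  have vv: "vv \<in> carrier_vec n" unfolding vv_def by auto
  have n0: "n \<noteq> 0" using v1 by (cases n) auto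
  have vv0: "vv \<noteq> 0\<^sub>v n"
  proof
    assume "vv = 0\<^sub>v n"
    then have "\<forall>u<n. v u = 0" unfolding vv_def by (metis index_vec index_zero_vec(1))
    with v1 show False by simp
  qed
  interpret cof_vec_space n "TYPE(real)" .
  define b where "b = basis_completion vv"
  from basis_completion[OF vv vv0, folded b_def]
  have dist_b: "distinct b" and indep: "\<not> lin_dep (set b)" and b: "set b \<subseteq> carrier_vec n"
    and hdb: "hd b = vv" and len_b: "length b = n" by auto
  from hdb len_b n0 obtain vs where bv: "b = vv # vs" by (cases b) auto
  define ws where "ws = gram_schmidt n b"
  from gram_schmidt_result[OF b dist_b indep refl, folded ws_def]
  have ws: "set ws \<subseteq> carrier_vec n" "corthogonal ws" "length ws = n" by (auto simp: len_b)
  from gram_schmidt_hd[OF vv, of vs, folded bv] have "hd ws = vv" unfolding ws_def .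
  then have ws0: "ws ! 0 = vv" using ws(3) n0 by (cases ws) auto
  have wsc: "ws ! i \<in> carrier_vec n" if "i < n" for i using ws that by auto
  have dot_eq: "ws ! i \<bullet> ws ! j = (\<Sum>u<n. ws ! i $ u * ws ! j $ u)" if "i < n" "j < n" for i j
    using wsc[OF that(2)] by (auto simp: scalar_prod_def lessThan_atLeast0)
  have orth: "(ws ! i \<bullet> ws ! j = 0) = (i \<noteq> j)" if "i < n" "j < n" for i j
    using corthogonalD[OF ws(2), of i j] ws(3) that by simp
  have pos: "0 < ws ! i \<bullet> ws ! i" if i: "i < n" for i
  proof -
    have "0 \<le> ws ! i \<bullet> ws ! i" unfolding dot_eq[OF i i] by (intro sum_nonneg) auto
    with orth[OF i i] show ?thesis by simp
  qed
  define w where "w i u = ws ! i $ u / sqrt (ws ! i \<bullet> ws ! i)" for i u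
  have "ws ! 0 \<bullet> ws ! 0 = 1" using dot_eq[of 0 0] n0 v1 ws0 unfolding vv_def by simp
  then have "\<forall>u<n. w 0 u = v u" unfolding w_def ws0 vv_def by simp
  moreover have "orthonormal_family n w" unfolding orthonormal_family_def
  proof (intro allI impI)
    fix i j assume i: "i < n" and j: "j < n"
    have "(\<Sum>u<n. w i u * w j u)
        = (ws ! i \<bullet> ws ! j) / (sqrt (ws ! i \<bullet> ws ! i) * sqrt (ws ! j \<bullet> ws ! j))"
      unfolding dot_eq[OF i j] w_def sum_divide_distrib by (rule sum.cong) auto
    also have "\<dots> = (if i = j then 1 else 0)"
      using orth[OF i j] pos[OF i] by (cases "i = j") auto
    finally show "(\<Sum>u<n. w i u * w j u) = (if i = j then 1 else 0)" .
  qed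
  ultimately show ?thesis by blast
qed

lemma symmetric_bilinear_swap:
  fixes h :: "nat \<Rightarrow> nat \<Rightarrow> real"
  assumes "symmetric_on n h"
  shows "(\<Sum>u<n. y u * (\<Sum>w<n. h u w * x w)) = (\<Sum>u<n. x u * (\<Sum>w<n. h u w * y w))"
proof -
  have "(\<Sum>u<n. y u * (\<Sum>w<n. h u w * x w)) = (\<Sum>u<n. \<Sum>w<n. y u * h u w * x w)"
    by (simp add: sum_distrib_left mult.assoc)
  also have "\<dots> = (\<Sum>w<n. \<Sum>u<n. y u * h u w * x w)" by (rule sum.swap)
  also have "\<dots> = (\<Sum>w<n. \<Sum>u<n. x w * h w u * y u)"
    using assms by (intro sum.cong refl) (auto simp: symmetric_on_def)
  also have "\<dots> = (\<Sum>u<n. x u * (\<Sum>w<n. h u w * y w))"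
    by (simp add: sum_distrib_left mult.assoc)
  finally show ?thesis .
qed

lemma normalize_eigenvector:
  fixes t :: "nat \<Rightarrow> real"
  assumes nz: "(\<Sum>u<n. t u * t u) \<noteq> 0"
    and ev: "\<forall>u<n. (\<Sum>w<n. h u w * t w) = a * t u"
  shows "\<exists>v. (\<Sum>u<n. v u * v u) = 1 \<and> (\<forall>u<n. (\<Sum>w<n. h u w * v w) = a * v u)"
proof -
  define s where "s = sqrt (\<Sum>u<n. t u * t u)"
  have "0 \<le> (\<Sum>u<n. t u * t u)" by (intro sum_nonneg) auto
  with nz have s: "0 < s" "s * s = (\<Sum>u<n. t u * t u)" unfolding s_def by auto
  have "(\<Sum>u<n. t u / s * (t u / s)) = 1"
    using s nz by (simp add: sum_divide_distrib[symmetric])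
  moreover have "\<forall>u<n. (\<Sum>w<n. h u w * (t w / s)) = a * (t u / s)"
    using ev by (simp add: sum_divide_distrib[symmetric])
  ultimately show ?thesis by (intro exI[of _ "\<lambda>u. t u / s"]) simp
qed

text \<open>Here \<open>x + i y\<close> is an eigenvector for the eigenvalue \<open>a + i b\<close>, which is therefore real.\<close>

lemma symmetric_eigenvalue_real:
  fixes h :: "nat \<Rightarrow> nat \<Rightarrow> real"
  assumes sym: "symmetric_on n h"
    and ex: "\<forall>u<n. (\<Sum>w<n. h u w * x w) = a * x u - b * y u"
    and ey: "\<forall>u<n. (\<Sum>w<n. h u w * y w) = b * x u + a * y u"
  shows "b * (\<Sum>u<n. x u * x u + y u * y u) = 0"
proof -
  have "(\<Sum>u<n. y u * (a * x u - b * y u)) = (\<Sum>u<n. y u * (\<Sum>w<n. h u w * x w))"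
    using ex by simp
  also have "\<dots> = (\<Sum>u<n. x u * (\<Sum>w<n. h u w * y w))" by (rule symmetric_bilinear_swap[OF sym])
  also have "\<dots> = (\<Sum>u<n. x u * (b * x u + a * y u))" using ey by simp
  finally have eq: "(\<Sum>u<n. y u * (a * x u - b * y u)) = (\<Sum>u<n. x u * (b * x u + a * y u))" .
  have "(\<Sum>u<n. y u * (a * x u - b * y u)) = a * (\<Sum>u<n. x u * y u) - b * (\<Sum>u<n. y u * y u)"
    by (simp add: sum_subtractf sum_distrib_left algebra_simps)
  moreover have "(\<Sum>u<n. x u * (b * x u + a * y u))
      = b * (\<Sum>u<n. x u * x u) + a * (\<Sum>u<n. x u * y u)"
    by (simp add: sum.distrib sum_distrib_left algebra_simps)
  ultimately show ?thesis using eq by (simp add: sum.distrib distrib_left)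
qed

lemma symmetric_has_unit_eigenvector:
  fixes h :: "nat \<Rightarrow> nat \<Rightarrow> real"
  assumes sym: "symmetric_on n h" and n: "n \<ge> 1"
  shows "\<exists>v lam. (\<Sum>u<n. v u * v u) = 1 \<and> (\<forall>u<n. (\<Sum>w<n. h u w * v w) = lam * v u)"
proof -
  define A where "A = mat n n (\<lambda>(i, j). complex_of_real (h i j))"
  have A: "A \<in> carrier_mat n n" unfolding A_def by auto
  from degree_monic_char_poly[OF A] n have "\<not> constant (poly (char_poly A))"
    by (simp add: constant_degree)
  from fundamental_theorem_of_algebra[OF this] obtain z where "poly (char_poly A) z = 0" by auto
  then have "eigenvalue A z" using eigenvalue_root_char_poly[OF A] by simp
  then obtain vc where "eigenvector A vc z" unfolding eigenvalue_def by auto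
  then have vc: "vc \<in> carrier_vec n" "vc \<noteq> 0\<^sub>v n" "A *\<^sub>v vc = z \<cdot>\<^sub>v vc"
    unfolding eigenvector_def using A by auto
  define x where "x u = Re (vc $ u)" for u
  define y where "y u = Im (vc $ u)" for u
  have eqc: "(\<Sum>w<n. complex_of_real (h u w) * vc $ w) = z * vc $ u" if u: "u < n" for u
  proof -
    have "(A *\<^sub>v vc) $ u = (\<Sum>w<n. complex_of_real (h u w) * vc $ w)"
      using u vc(1) by (auto simp: A_def scalar_prod_def lessThan_atLeast0)
    then show ?thesis using vc(3) u vc(1) by simp
  qed
  have ex: "\<forall>u<n. (\<Sum>w<n. h u w * x w) = Re z * x u - Im z * y u"
    using arg_cong[OF eqc, of _ Re] by (simp add: x_def y_def Re_sum)
  have ey: "\<forall>u<n. (\<Sum>w<n. h u w * y w) = Im z * x u + Re z * y u"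
    using arg_cong[OF eqc, of _ Im] by (simp add: x_def y_def Im_sum)
  obtain u0 where u0: "u0 < n" "vc $ u0 \<noteq> 0"
    using vc(1,2) by (metis carrier_vecD eq_vecI index_zero_vec(1) index_zero_vec(2))
  have "0 < x u0 * x u0 + y u0 * y u0"
    using u0(2) by (simp add: sum_squares_gt_zero_iff x_def y_def complex_eq_iff)
  also have "\<dots> \<le> (\<Sum>u<n. x u * x u + y u * y u)"
    using u0(1) by (intro member_le_sum) auto
  finally have pos: "0 < (\<Sum>u<n. x u * x u) + (\<Sum>u<n. y u * y u)" by (simp add: sum.distrib)
  then have "Im z = 0" using symmetric_eigenvalue_real[OF sym ex ey] by (simp add: sum.distrib)
  then have ex': "\<forall>u<n. (\<Sum>w<n. h u w * x w) = Re z * x u"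
    and ey': "\<forall>u<n. (\<Sum>w<n. h u w * y w) = Re z * y u"
    using ex ey by simp_all
  from pos have "(\<Sum>u<n. x u * x u) \<noteq> 0 \<or> (\<Sum>u<n. y u * y u) \<noteq> 0" by auto
  then show ?thesis using normalize_eigenvector[OF _ ex'] normalize_eigenvector[OF _ ey'] by blast
qed

lemma orthonormal_expansion:
  fixes w :: "nat \<Rightarrow> nat \<Rightarrow> real"
  assumes "orthonormal_family N (\<lambda>u l. w l u)" and "u < N"
  shows "z u = (\<Sum>l<N. (\<Sum>u'<N. w l u' * z u') * w l u)"
proof -
  have "(\<Sum>l<N. (\<Sum>u'<N. w l u' * z u') * w l u) = (\<Sum>l<N. \<Sum>u'<N. z u' * (w l u' * w l u))"
    by (intro sum.cong refl) (simp add: sum_distrib_left sum_distrib_right mult_ac)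
  also have "\<dots> = (\<Sum>u'<N. \<Sum>l<N. z u' * (w l u' * w l u))" by (rule sum.swap)
  also have "\<dots> = (\<Sum>u'<N. z u' * (if u' = u then 1 else 0))"
    using assms by (intro sum.cong refl) (auto simp: orthonormal_family_def sum_distrib_left[symmetric])
  also have "\<dots> = z u" using assms(2) by (simp add: if_distrib cong: if_cong)
  finally show ?thesis by simp
qed

lemma parseval:
  fixes q :: "nat \<Rightarrow> nat \<Rightarrow> real"
  assumes "orthonormal_family n q"
  shows "(\<Sum>u<n. y u * z u) = (\<Sum>i<n. (\<Sum>u<n. q i u * y u) * (\<Sum>u<n. q i u * z u))"
proof -
  note expand = orthonormal_expansion[OF orthonormal_family_transpose[OF assms]]
  have "(\<Sum>u<n. y u * z u) = (\<Sum>u<n. y u * (\<Sum>i<n. (\<Sum>u'<n. q i u' * z u') * q i u))"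
    by (intro sum.cong refl) (subst expand[of _ z], auto)
  also have "\<dots> = (\<Sum>u<n. \<Sum>i<n. (\<Sum>u'<n. q i u' * z u') * (q i u * y u))"
    by (simp add: sum_distrib_left mult_ac)
  also have "\<dots> = (\<Sum>i<n. \<Sum>u<n. (\<Sum>u'<n. q i u' * z u') * (q i u * y u))" by (rule sum.swap)
  also have "\<dots> = (\<Sum>i<n. (\<Sum>u<n. q i u * y u) * (\<Sum>u<n. q i u * z u))"
    by (intro sum.cong refl) (simp add: sum_product sum_distrib_right mult_ac)
  finally show ?thesis .
qed

lemma orthonormal_combination_inner:
  fixes w :: "nat \<Rightarrow> nat \<Rightarrow> real"
  assumes "orthonormal_family N w" and "m < N"
  shows "(\<Sum>u<N. (\<Sum>j<m. a j * w (Suc j) u) * (\<Sum>j<m. b j * w (Suc j) u)) = (\<Sum>j<m. a j * b j)"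
proof -
  have "(\<Sum>u<N. (\<Sum>j<m. a j * w (Suc j) u) * (\<Sum>j<m. b j * w (Suc j) u))
     = (\<Sum>u<N. \<Sum>j<m. \<Sum>j'<m. a j * b j' * (w (Suc j) u * w (Suc j') u))"
    by (intro sum.cong refl) (simp add: sum_product mult_ac)
  also have "\<dots> = (\<Sum>j<m. \<Sum>j'<m. \<Sum>u<N. a j * b j' * (w (Suc j) u * w (Suc j') u))"
    by (simp add: sum.swap[of _ "{..<N}"])
  also have "\<dots> = (\<Sum>j<m. \<Sum>j'<m. a j * b j' * (if j = j' then 1 else 0))"
    using assms
    by (intro sum.cong refl) (auto simp: orthonormal_family_def sum_distrib_left[symmetric])
  also have "\<dots> = (\<Sum>j<m. a j * b j)" by (simp add: if_distrib cong: if_cong)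
  finally show ?thesis .
qed

text \<open>The matrix of \<open>h\<close> on the orthogonal complement of \<open>w 0\<close>, in the basis
  \<open>w 1, \<dots>, w (N - 1)\<close>.\<close>

definition compression ::
    "nat \<Rightarrow> (nat \<Rightarrow> nat \<Rightarrow> real) \<Rightarrow> (nat \<Rightarrow> nat \<Rightarrow> real) \<Rightarrow> nat \<Rightarrow> nat \<Rightarrow> real" where
  "compression N h w i j = (\<Sum>u<N. w (Suc i) u * (\<Sum>x<N. h u x * w (Suc j) x))"

lemma symmetric_on_compression:
  assumes "symmetric_on N h"
  shows "symmetric_on m (compression N h w)"
  unfolding symmetric_on_def compression_def using symmetric_bilinear_swap[OF assms] by blast

lemma apply_to_complement_basis:
  fixes h w :: "nat \<Rightarrow> nat \<Rightarrow> real"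
  assumes sym: "symmetric_on (Suc m) h" and w: "orthonormal_family (Suc m) w"
    and ev: "\<forall>u<Suc m. (\<Sum>x<Suc m. h u x * w 0 x) = lam * w 0 u"
    and u: "u < Suc m" and j: "j < m"
  shows "(\<Sum>x<Suc m. h u x * w (Suc j) x) = (\<Sum>l<m. compression (Suc m) h w l j * w (Suc l) u)"
proof -
  let ?z = "\<lambda>u. (\<Sum>x<Suc m. h u x * w (Suc j) x)"
  have "(\<Sum>u'<Suc m. w 0 u' * ?z u') = (\<Sum>u'<Suc m. w (Suc j) u' * (\<Sum>x<Suc m. h u' x * w 0 x))"
    by (rule symmetric_bilinear_swap[OF sym])
  also have "\<dots> = lam * (\<Sum>u'<Suc m. w 0 u' * w (Suc j) u')"
    using ev by (simp add: sum_distrib_left mult_ac del: sum.lessThan_Suc)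
  also have "(\<Sum>u'<Suc m. w 0 u' * w (Suc j) u') = 0"
    using w j unfolding orthonormal_family_def by auto
  finally have "(\<Sum>u'<Suc m. w 0 u' * ?z u') = 0" by simp
  then show ?thesis
    using orthonormal_expansion[OF orthonormal_family_transpose[OF w] u, of ?z]
    by (simp add: sum.lessThan_Suc_shift compression_def del: sum.lessThan_Suc)
qed

lemma orthonormal_family_extend:
  fixes w p :: "nat \<Rightarrow> nat \<Rightarrow> real"
  assumes w: "orthonormal_family (Suc m) w" and p: "orthonormal_family m p"
  shows "orthonormal_family (Suc m)
           (\<lambda>i u. case i of 0 \<Rightarrow> w 0 u | Suc i' \<Rightarrow> \<Sum>j<m. p i' j * w (Suc j) u)"
    (is "orthonormal_family _ ?q")
proof -
  have mixed: "(\<Sum>u<Suc m. w 0 u * (\<Sum>j<m. a j * w (Suc j) u)) = 0" for a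
  proof -
    have "(\<Sum>u<Suc m. w 0 u * (\<Sum>j<m. a j * w (Suc j) u))
        = (\<Sum>j<m. a j * (\<Sum>u<Suc m. w 0 u * w (Suc j) u))"
      unfolding sum_distrib_left by (subst sum.swap) (simp add: mult_ac)
    also have "\<dots> = 0" using w unfolding orthonormal_family_def by simp
    finally show ?thesis .
  qed
  have "(\<Sum>u<Suc m. ?q i u * ?q j u) = (if i = j then 1 else 0)"
    if "i < Suc m" "j < Suc m" for i j
  proof (cases i; cases j)
    assume "i = 0" "j = 0"
    then show ?thesis using w unfolding orthonormal_family_def by simp
  next
    fix j' assume "i = 0" "j = Suc j'"
    then show ?thesis using mixed by simp
  next
    fix i' assume "i = Suc i'" "j = 0"
    then show ?thesis using mixed by (simp add: mult.commute)
  next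
    fix i' j' assume "i = Suc i'" "j = Suc j'"
    with that p show ?thesis
      by (simp add: orthonormal_combination_inner[OF w] orthonormal_family_def del: sum.lessThan_Suc)
  qed
  then show ?thesis unfolding orthonormal_family_def by blast
qed

text \<open>Induction on \<open>n\<close>: extend \<open>v\<close> to an orthonormal basis \<open>w\<close>; as \<open>h\<close> maps the complement of
  \<open>v\<close> to itself, an eigenbasis of the compression lifts to the rest of the eigenbasis of \<open>h\<close>.\<close>

theorem symmetric_eigenbasis_extends:
  fixes h :: "nat \<Rightarrow> nat \<Rightarrow> real"
  assumes "symmetric_on n h" and "(\<Sum>u<n. v u * v u) = 1"
    and "\<forall>u<n. (\<Sum>w<n. h u w * v w) = lam * v u"
  shows "\<exists>q mu. (\<forall>u<n. q 0 u = v u) \<and> mu 0 = lam \<and> eigenbasis n h q mu"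
  using assms
proof (induction n arbitrary: h v lam)
  case 0
  then show ?case by (auto simp: eigenbasis_def orthonormal_family_def)
next
  case (Suc m)
  note sym = Suc.prems(1) and v1 = Suc.prems(2) and ev = Suc.prems(3)
  show ?case
  proof (cases "m = 0")
    case True
    with v1 ev show ?thesis
      by (intro exI[of _ "\<lambda>i. v"] exI[of _ "\<lambda>i. lam"])
        (auto simp: eigenbasis_def orthonormal_family_def)
  next
    case False
    obtain w where w0: "\<forall>u<Suc m. w 0 u = v u" and w: "orthonormal_family (Suc m) w"
      using unit_vector_extends_to_orthonormal_family[OF v1] by blast
    have ev_w: "\<forall>u<Suc m. (\<Sum>x<Suc m. h u x * w 0 x) = lam * w 0 u" using ev w0 by simp
    let ?h' = "compression (Suc m) h w"
    have sym': "symmetric_on m ?h'" by (rule symmetric_on_compression[OF sym])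
    obtain v' lam' where "(\<Sum>u<m. v' u * v' u) = 1" "\<forall>u<m. (\<Sum>x<m. ?h' u x * v' x) = lam' * v' u"
      using symmetric_has_unit_eigenvector[OF sym'] False by force
    from Suc.IH[OF sym' this] obtain p mu' where p: "eigenbasis m ?h' p mu'" by blast
    define q where "q i u = (case i of 0 \<Rightarrow> w 0 u | Suc i' \<Rightarrow> \<Sum>j<m. p i' j * w (Suc j) u)" for i u
    define mu where "mu i = (case i of 0 \<Rightarrow> lam | Suc i' \<Rightarrow> mu' i')" for i
    have "orthonormal_family (Suc m) q"
      unfolding q_def using orthonormal_family_extend[OF w] p by (simp add: eigenbasis_def)
    moreover have "(\<Sum>x<Suc m. h u x * q i x) = mu i * q i u"
      if i: "i < Suc m" and u: "u < Suc m" for i u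
    proof (cases i)
      case 0
      then show ?thesis using ev_w u by (simp add: q_def mu_def)
    next
      case (Suc i')
      with i have i': "i' < m" by simp
      have pev: "(\<Sum>j<m. ?h' l j * p i' j) = mu' i' * p i' l" if "l < m" for l
        using p i' that by (simp add: eigenbasis_def)
      have "(\<Sum>x<Suc m. h u x * q i x) = (\<Sum>x<Suc m. \<Sum>j<m. p i' j * (h u x * w (Suc j) x))"
        unfolding q_def Suc by (simp add: sum_distrib_left mult_ac)
      also have "\<dots> = (\<Sum>j<m. p i' j * (\<Sum>x<Suc m. h u x * w (Suc j) x))"
        unfolding sum_distrib_left by (rule sum.swap)
      also have "\<dots> = (\<Sum>j<m. p i' j * (\<Sum>l<m. ?h' l j * w (Suc l) u))"
        using apply_to_complement_basis[OF sym w ev_w u] by simp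
      also have "\<dots> = (\<Sum>l<m. (\<Sum>j<m. ?h' l j * p i' j) * w (Suc l) u)"
        unfolding sum_distrib_left sum_distrib_right by (subst sum.swap) (simp add: mult_ac)
      also have "\<dots> = mu i * q i u"
        unfolding q_def mu_def Suc using pev by (simp add: sum_distrib_left mult_ac)
      finally show ?thesis .
    qed
    ultimately have "eigenbasis (Suc m) h q mu" unfolding eigenbasis_def by blast
    moreover have "\<forall>u<Suc m. q 0 u = v u" "mu 0 = lam" using w0 by (simp_all add: q_def mu_def)
    ultimately show ?thesis by blast
  qed
qed

lemma proots_prod_linear: "proots (\<Prod>a\<leftarrow>xs. [:- a, 1:]) = mset (xs :: real list)"
proof -
  have "proots (\<Prod>a\<leftarrow>xs. [:- a, 1:]) = proots (\<Prod>p\<leftarrow>map (\<lambda>a. [:- a, 1:]) xs. p)"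
    by (simp add: comp_def)
  also have "\<dots> = (\<Sum>p\<leftarrow>map (\<lambda>a. [:- a, 1:]) xs. proots p)"
    by (rule proots_prod_list) auto
  also have "\<dots> = mset xs" by (induction xs) auto
  finally show ?thesis .
qed

lemma char_poly_eigenbasis:
  assumes eb: "eigenbasis n h q mu"
  shows "char_poly (mat n n (\<lambda>(i, j). h i j)) = (\<Prod>a\<leftarrow>map mu [0..<n]. [:- a, 1:])"
proof -
  define H where "H = mat n n (\<lambda>(i, j). h i j)"
  define Q where "Q = mat n n (\<lambda>(u, i). q i u)"
  have H: "H \<in> carrier_mat n n" and Q: "Q \<in> carrier_mat n n" "transpose_mat Q \<in> carrier_mat n n"
    and D: "mat_diag n mu \<in> carrier_mat n n"
    unfolding H_def Q_def by auto
  have QtQ: "transpose_mat Q * Q = 1\<^sub>m n"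
    using eb by (intro eq_matI)
      (auto simp: eigenbasis_def orthonormal_family_def Q_def scalar_prod_def lessThan_atLeast0)
  then have QQt: "Q * transpose_mat Q = 1\<^sub>m n"
    by (rule mat_mult_left_right_inverse[OF Q(2) Q(1)])
  have "H * Q = Q * mat_diag n mu"
  proof (rule eq_matI)
    fix i j assume "i < dim_row (Q * mat_diag n mu)" "j < dim_col (Q * mat_diag n mu)"
    then have i: "i < n" and j: "j < n" using Q D by auto
    then have "(H * Q) $$ (i, j) = (\<Sum>w<n. h i w * q j w)"
      by (auto simp: H_def Q_def scalar_prod_def lessThan_atLeast0)
    also have "\<dots> = q j i * mu j" using eb i j by (simp add: eigenbasis_def)
    finally show "(H * Q) $$ (i, j) = (Q * mat_diag n mu) $$ (i, j)"
      unfolding mat_diag_mult_right[OF Q(1)] using i j by (simp add: Q_def)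
  qed (use H Q in \<open>auto simp: carrier_matD[OF D]\<close>)
  then have "H = Q * mat_diag n mu * transpose_mat Q"
    using H Q QQt by (metis assoc_mult_mat right_mult_one_mat)
  from similar_mat_witI[OF QQt QtQ this H D Q]
  have "similar_mat H (mat_diag n mu)" unfolding similar_mat_def by blast
  then have "char_poly H = char_poly (mat_diag n mu)" by (rule char_poly_similar)
  also have "\<dots> = (\<Prod>a\<leftarrow>diag_mat (mat_diag n mu). [:- a, 1:])"
    by (rule char_poly_upper_triangular) (auto simp: upper_triangular_def mat_diag_def)
  also have "diag_mat (mat_diag n mu) = map mu [0..<n]"
    by (intro nth_equalityI) (auto simp: diag_mat_def mat_diag_def)
  finally show ?thesis unfolding H_def .
qed

lemma eigenvalues_sorted_eigenbasis:
  assumes "eigenbasis n h q mu"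
  shows "eigenvalues_sorted (mat n n (\<lambda>(i, j). h i j)) = sort (map mu [0..<n])"
  unfolding eigenvalues_sorted_def char_poly_eigenbasis[OF assms] proots_prod_linear
  by (simp only: sorted_list_of_multiset_mset)

lemma eigenbasis_quadratic_forms:
  fixes h q :: "nat \<Rightarrow> nat \<Rightarrow> real"
  assumes sym: "symmetric_on n h" and eb: "eigenbasis n h q mu"
  shows "(\<Sum>u<n. x u * (\<Sum>w<n. h u w * x w)) = (\<Sum>i<n. mu i * (\<Sum>u<n. q i u * x u)^2)"
    and "(\<Sum>u<n. (\<Sum>w<n. h u w * x w)^2) = (\<Sum>i<n. (mu i)^2 * (\<Sum>u<n. q i u * x u)^2)"
proof -
  have on: "orthonormal_family n q" using eb by (simp add: eigenbasis_def)
  have qh: "(\<Sum>u<n. q i u * (\<Sum>w<n. h u w * x w)) = mu i * (\<Sum>u<n. q i u * x u)"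
    if i: "i < n" for i
  proof -
    have "(\<Sum>u<n. q i u * (\<Sum>w<n. h u w * x w)) = (\<Sum>u<n. x u * (\<Sum>w<n. h u w * q i w))"
      by (rule symmetric_bilinear_swap[OF sym])
    also have "\<dots> = (\<Sum>u<n. x u * (mu i * q i u))" using eb i by (simp add: eigenbasis_def)
    finally show ?thesis by (simp add: sum_distrib_left mult_ac)
  qed
  show "(\<Sum>u<n. x u * (\<Sum>w<n. h u w * x w)) = (\<Sum>i<n. mu i * (\<Sum>u<n. q i u * x u)^2)"
    unfolding parseval[OF on, of x] by (rule sum.cong) (auto simp: qh power2_eq_square)
  show "(\<Sum>u<n. (\<Sum>w<n. h u w * x w)^2) = (\<Sum>i<n. (mu i)^2 * (\<Sum>u<n. q i u * x u)^2)"
    unfolding power2_eq_square parseval[OF on, of "\<lambda>u. (\<Sum>w<n. h u w * x w)"]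
    by (rule sum.cong) (auto simp: qh)
qed

section \<open>A rearrangement inequality\<close>

text \<open>With \<open>T = g (K - 1)\<close>, monotonicity gives
  \<open>g i * w i - [i < K] g i \<ge> T * (w i - [i < K])\<close> termwise, and the right-hand sides sum to
  \<open>T * (\<Sum> w - K) \<ge> 0\<close>.\<close>

lemma sum_prefix_le_weighted_sum:
  fixes g w :: "nat \<Rightarrow> real"
  assumes mono: "\<And>i j. i \<le> j \<Longrightarrow> j < N \<Longrightarrow> g i \<le> g j" and g0: "\<And>i. i < N \<Longrightarrow> 0 \<le> g i"
    and w01: "\<And>i. i < N \<Longrightarrow> 0 \<le> w i \<and> w i \<le> 1" and ws: "real K \<le> (\<Sum>i<N. w i)"
  shows "(\<Sum>i<K. g i) \<le> (\<Sum>i<N. g i * w i)"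
proof (cases "K = 0")
  case True
  then show ?thesis using g0 w01 by (auto intro!: sum_nonneg mult_nonneg_nonneg)
next
  case False
  have "(\<Sum>i<N. w i) \<le> (\<Sum>i<N. 1)" using w01 by (intro sum_mono) auto
  with ws have KN: "K \<le> N" by simp
  have prefix: "(\<Sum>i<N. of_bool (i < K) * c i) = (\<Sum>i<K. c i)" for c :: "nat \<Rightarrow> real"
  proof -
    have "(\<Sum>i<N. of_bool (i < K) * c i) = (\<Sum>i<K. of_bool (i < K) * c i)"
      using KN by (intro sum.mono_neutral_right) auto
    then show ?thesis by simp
  qed
  define T where "T = g (K - 1)"
  have "T * (w i - of_bool (i < K)) \<le> g i * w i - of_bool (i < K) * g i" if i: "i < N" for i
  proof (cases "i < K")
    case True
    then have "g i \<le> T" unfolding T_def using mono KN by auto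
    moreover have "w i - 1 \<le> 0" using w01 i by auto
    ultimately have "T * (w i - 1) \<le> g i * (w i - 1)" by (rule mult_right_mono_neg)
    then show ?thesis using True by (simp add: algebra_simps)
  next
    case False
    then have "T \<le> g i" unfolding T_def using mono i by auto
    then show ?thesis using False w01 i by (simp add: mult_right_mono)
  qed
  then have "(\<Sum>i<N. T * (w i - of_bool (i < K))) \<le> (\<Sum>i<N. g i * w i - of_bool (i < K) * g i)"
    by (intro sum_mono) auto
  moreover have "(\<Sum>i<N. T * (w i - of_bool (i < K))) = T * ((\<Sum>i<N. w i) - real K)"
    using prefix[of "\<lambda>_. 1"] by (simp add: sum_distrib_left[symmetric] sum_subtractf)
  moreover have "0 \<le> T * ((\<Sum>i<N. w i) - real K)"
    using g0 KN False ws unfolding T_def by simp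
  ultimately show ?thesis using prefix[of g] by (simp add: sum_subtractf)
qed

lemma sum_sorted_prefix_le_weighted_sum:
  fixes xs :: "real list" and f :: "real \<Rightarrow> real" and w :: "nat \<Rightarrow> real"
  assumes nonneg: "\<And>x. x \<in> set xs \<Longrightarrow> 0 \<le> x"
    and fmono: "\<And>x y. 0 \<le> x \<Longrightarrow> x \<le> y \<Longrightarrow> f x \<le> f y" and f0: "\<And>x. 0 \<le> x \<Longrightarrow> 0 \<le> f x"
    and w01: "\<And>i. i < length xs \<Longrightarrow> 0 \<le> w i \<and> w i \<le> 1"
    and ws: "real K \<le> (\<Sum>i<length xs. w i)"
  shows "(\<Sum>i<K. f (sort xs ! i)) \<le> (\<Sum>i<length xs. f (xs ! i) * w i)"
proof -
  let ?N = "length xs"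
  obtain p where p: "bij_betw p {..<?N} {..<?N}" and sp: "\<forall>i<?N. sort xs ! i = xs ! p i"
    using permutation_Ex_bij[of "sort xs" xs] by auto
  have p_lt: "i < ?N \<Longrightarrow> p i < ?N" for i using p by (auto dest: bij_betw_apply)
  have sorted_nonneg: "i < ?N \<Longrightarrow> 0 \<le> sort xs ! i" for i
    using sp p_lt nonneg by (metis nth_mem)
  have "(\<Sum>i<K. f (sort xs ! i)) \<le> (\<Sum>i<?N. f (sort xs ! i) * w (p i))"
  proof (rule sum_prefix_le_weighted_sum)
    show "f (sort xs ! i) \<le> f (sort xs ! j)" if "i \<le> j" "j < ?N" for i j
      using that sorted_nonneg by (intro fmono) (auto simp: sorted_nth_mono)
    show "real K \<le> (\<Sum>i<?N. w (p i))"
      using ws sum.reindex_bij_betw[OF p, of w] by simp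
  qed (use sorted_nonneg f0 w01 p_lt in auto)
  also have "\<dots> = (\<Sum>i<?N. f (xs ! i) * w i)"
    using sum.reindex_bij_betw[OF p, of "\<lambda>i. f (xs ! i) * w i"] sp by simp
  finally show ?thesis .
qed

lemma sum_sorted_tail_le_weighted_sum:
  fixes mu w :: "nat \<Rightarrow> real" and f :: "real \<Rightarrow> real"
  assumes n: "1 \<le> n" and mu0: "mu 0 = 0" and mu_nonneg: "\<And>i. i < n \<Longrightarrow> 0 \<le> mu i"
    and w0: "w 0 = 0" and w01: "\<And>i. i < n \<Longrightarrow> 0 \<le> w i \<and> w i \<le> 1"
    and ws: "real K \<le> (\<Sum>i<n. w i)"
    and fmono: "\<And>x y. 0 \<le> x \<Longrightarrow> x \<le> y \<Longrightarrow> f x \<le> f y" and f0: "\<And>x. 0 \<le> x \<Longrightarrow> 0 \<le> f x"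
  shows "(\<Sum>j=1..K. f (sort (map mu [0..<n]) ! j)) \<le> (\<Sum>i<n. f (mu i) * w i)"
proof -
  obtain N where nN: "n = Suc N" using n by (cases n) auto
  define xs where "xs = map (\<lambda>i. mu (Suc i)) [0..<N]"
  have xs_nonneg: "\<And>x. x \<in> set xs \<Longrightarrow> 0 \<le> x" using mu_nonneg nN by (auto simp: xs_def)
  have "map mu [0..<n] = 0 # xs" unfolding nN xs_def using mu0 by (simp add: map_upt_Suc del: upt_Suc)
  moreover have "sort (0 # xs) = 0 # sort xs"
    using xs_nonneg by (intro properties_for_sort) auto
  ultimately have sort_eq: "sort (map mu [0..<n]) = 0 # sort xs" by simp
  have "(\<Sum>j=1..K. f (sort (map mu [0..<n]) ! j)) = (\<Sum>i<K. f (sort xs ! i))"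
    unfolding sort_eq One_nat_def sum.atLeast1_atMost_eq by simp
  also have "\<dots> \<le> (\<Sum>i<length xs. f (xs ! i) * w (Suc i))"
    by (rule sum_sorted_prefix_le_weighted_sum)
      (use xs_nonneg fmono f0 w01 ws w0 in \<open>auto simp: xs_def nN sum.lessThan_Suc_shift simp del: sum.lessThan_Suc\<close>)
  also have "\<dots> = (\<Sum>i<n. f (mu i) * w i)"
    using w0 by (simp add: xs_def nN sum.lessThan_Suc_shift del: sum.lessThan_Suc)
  finally show ?thesis .
qed

section \<open>Graphs and the renormalized Laplacian\<close>

lemma deg_eq_sum_adj:
  assumes "u < n"
  shows "real (deg n E u) = (\<Sum>w<n. adj E u w)"
proof -
  have "(\<Sum>w<n. adj E u w) = (\<Sum>w\<in>{v. v < n \<and> E u v}. 1)"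
    unfolding adj_def by (rule sum.mono_neutral_cong_right) auto
  then show ?thesis unfolding deg_def by simp
qed

lemma sum_deg_eq_twice_num_edges:
  assumes sg: "simple_graph n E"
  shows "(\<Sum>u<n. real (deg n E u)) = 2 * real (num_edges n E)"
proof -
  define S1 where "S1 = {(u, v). u < v \<and> v < n \<and> E u v}"
  define S2 where "S2 = {(u, v). v < u \<and> u < n \<and> E u v}"
  have fin: "finite S1" "finite S2"
    by (rule finite_subset[of _ "{..<n} \<times> {..<n}"]; auto simp: S1_def S2_def)+
  have "(\<Sum>u<n. deg n E u) = card (SIGMA u:{..<n}. {v. v < n \<and> E u v})"
    unfolding deg_def by (subst card_SigmaI) auto
  also have "(SIGMA u:{..<n}. {v. v < n \<and> E u v}) = S1 \<union> S2"
    using sg unfolding S1_def S2_def simple_graph_def by auto (metis linorder_neqE_nat)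
  also have "card (S1 \<union> S2) = card S1 + card S2"
    using fin by (intro card_Un_disjoint) (auto simp: S1_def S2_def)
  also have "card S2 = card S1"
    using sg unfolding S1_def S2_def simple_graph_def
    by (intro bij_betw_same_card[of "\<lambda>(u, v). (v, u)"]) (auto simp: bij_betw_def inj_on_def image_def)
  finally show ?thesis unfolding num_edges_def S1_def by (simp flip: of_nat_sum)
qed

lemma sum_edge_form:
  fixes a :: "nat \<Rightarrow> nat \<Rightarrow> real"
  assumes "symmetric_on n a"
  shows "(\<Sum>u<n. \<Sum>w<n. a u w * (y u)^2 - a u w * y u * y w)
       = (\<Sum>u<n. \<Sum>w<n. a u w * (y u - y w)^2) / 2"
proof -
  have "(\<Sum>u<n. \<Sum>w<n. a u w * (y w)^2) = (\<Sum>w<n. \<Sum>u<n. a u w * (y w)^2)" by (rule sum.swap)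
  also have "\<dots> = (\<Sum>u<n. \<Sum>w<n. a u w * (y u)^2)"
    using assms by (intro sum.cong refl) (auto simp: symmetric_on_def)
  finally have swap: "(\<Sum>u<n. \<Sum>w<n. a u w * (y w)^2) = (\<Sum>u<n. \<Sum>w<n. a u w * (y u)^2)" .
  have "(\<Sum>u<n. \<Sum>w<n. a u w * (y u - y w)^2)
     = (\<Sum>u<n. \<Sum>w<n. a u w * (y u)^2) + (\<Sum>u<n. \<Sum>w<n. a u w * (y w)^2)
       - 2 * (\<Sum>u<n. \<Sum>w<n. a u w * y u * y w)"
    by (simp add: power2_diff algebra_simps sum.distrib sum_subtractf sum_distrib_left)
  then show ?thesis unfolding swap by (simp add: sum_subtractf algebra_simps)
qed

text \<open>Positive semidefiniteness of \<open>I - D^(-1/2) A D^(-1/2)\<close>, via the substitution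
  \<open>y = D^(-1/2) x\<close>.\<close>

lemma normalized_form_nonneg:
  fixes a :: "nat \<Rightarrow> nat \<Rightarrow> real" and d x :: "nat \<Rightarrow> real"
  assumes sym: "symmetric_on n a" and a0: "\<And>u w. 0 \<le> a u w"
    and dsum: "\<And>u. u < n \<Longrightarrow> d u = (\<Sum>w<n. a u w)" and dpos: "\<And>u. u < n \<Longrightarrow> 0 < d u"
  shows "0 \<le> (\<Sum>u<n. x u * (x u - (\<Sum>w<n. a u w * x w / sqrt (d u * d w))))"
proof -
  define y where "y u = x u / sqrt (d u)" for u
  have d_nz: "d u \<noteq> 0" if "u < n" for u using dpos[OF that] by simp
  have x_eq: "x u = sqrt (d u) * y u" if "u < n" for u
    using dpos[OF that] by (simp add: y_def)
  have "x u * (x u - (\<Sum>w<n. a u w * x w / sqrt (d u * d w)))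
      = (\<Sum>w<n. a u w * (y u)^2 - a u w * y u * y w)" if u: "u < n" for u
  proof -
    have "x u * x u = (\<Sum>w<n. a u w * (y u)^2)"
      using x_eq[OF u] dpos[OF u] dsum[OF u]
      by (simp add: sum_distrib_right[symmetric] power2_eq_square)
    moreover have "x u * (\<Sum>w<n. a u w * x w / sqrt (d u * d w)) = (\<Sum>w<n. a u w * y u * y w)"
      unfolding sum_distrib_left
      using x_eq u by (intro sum.cong refl) (simp add: real_sqrt_mult field_simps d_nz)
    ultimately show ?thesis by (simp add: right_diff_distrib sum_subtractf)
  qed
  then have "(\<Sum>u<n. x u * (x u - (\<Sum>w<n. a u w * x w / sqrt (d u * d w))))
      = (\<Sum>u<n. \<Sum>w<n. a u w * (y u)^2 - a u w * y u * y w)"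
    by (intro sum.cong) auto
  also have "\<dots> = (\<Sum>u<n. \<Sum>w<n. a u w * (y u - y w)^2) / 2" by (rule sum_edge_form[OF sym])
  also have "\<dots> \<ge> 0" using a0 by (intro divide_nonneg_pos sum_nonneg mult_nonneg_nonneg) auto
  finally show ?thesis .
qed

lemma sum_sq_cross_diff:
  fixes d y :: "nat \<Rightarrow> real"
  assumes "\<And>u. u < n \<Longrightarrow> 0 \<le> d u"
  shows "(\<Sum>u<n. \<Sum>v<n. (sqrt (d v) * y u - sqrt (d u) * y v)^2)
       = 2 * (\<Sum>u<n. d u) * (\<Sum>u<n. (y u)^2) - 2 * (\<Sum>u<n. sqrt (d u) * y u)^2"
proof -
  have "(\<Sum>u<n. \<Sum>v<n. (sqrt (d v) * y u - sqrt (d u) * y v)^2)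
      = (\<Sum>u<n. \<Sum>v<n. (y u)^2 * d v + d u * (y v)^2
           - 2 * ((sqrt (d u) * y u) * (sqrt (d v) * y v)))"
    using assms by (intro sum.cong refl) (auto simp: power2_diff power_mult_distrib mult_ac)
  also have "\<dots> = (\<Sum>u<n. \<Sum>v<n. (y u)^2 * d v) + (\<Sum>u<n. \<Sum>v<n. d u * (y v)^2)
      - 2 * (\<Sum>u<n. \<Sum>v<n. (sqrt (d u) * y u) * (sqrt (d v) * y v))"
    by (simp add: sum_subtractf sum.distrib sum_distrib_left)
  also have "\<dots> = 2 * (\<Sum>u<n. d u) * (\<Sum>u<n. (y u)^2) - 2 * (\<Sum>u<n. sqrt (d u) * y u)^2"
  proof -
    have "(\<Sum>u<n. \<Sum>v<n. (y u)^2 * d v) = (\<Sum>u<n. d u) * (\<Sum>u<n. (y u)^2)"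
      unfolding sum_product[symmetric] by (rule mult.commute)
    moreover have "(\<Sum>u<n. \<Sum>v<n. d u * (y v)^2) = (\<Sum>u<n. d u) * (\<Sum>u<n. (y u)^2)"
      unfolding sum_product[symmetric] ..
    moreover have "(\<Sum>u<n. \<Sum>v<n. (sqrt (d u) * y u) * (sqrt (d v) * y v))
        = (\<Sum>u<n. sqrt (d u) * y u)^2"
      unfolding sum_product[symmetric] power2_eq_square ..
    ultimately show ?thesis by simp
  qed
  finally show ?thesis .
qed

locale connected_simple_graph =
  fixes n :: nat and E :: "nat \<Rightarrow> nat \<Rightarrow> bool"
  assumes simple: "simple_graph n E" and connected: "connected_graph n E" and two_le_n: "2 \<le> n"
begin

abbreviation dg :: "nat \<Rightarrow> real" where "dg u \<equiv> real (deg n E u)"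

abbreviation m :: real where "m \<equiv> real (num_edges n E)"

lemma deg_pos:
  assumes u: "u < n"
  shows "0 < dg u"
proof -
  define v where "v = (if u = 0 then 1 else 0 :: nat)"
  have v: "v < n" "v \<noteq> u" unfolding v_def using two_le_n by auto
  have "E\<^sup>*\<^sup>* u v" using connected u v unfolding connected_graph_def by auto
  then obtain x where "E u x" using v(2) by (metis converse_rtranclpE)
  then have "x \<in> {v. v < n \<and> E u v}" using simple unfolding simple_graph_def by auto
  then have "card {v. v < n \<and> E u v} > 0" by (subst card_gt_0_iff) auto
  then show ?thesis unfolding deg_def by simp
qed

lemma deg_neq_0: "u < n \<Longrightarrow> deg n E u \<noteq> 0"
  using deg_pos by force

lemma num_edges_pos: "0 < m"
proof -
  have "0 < (\<Sum>u<n. dg u)" using two_le_n deg_pos by (intro sum_pos) (auto simp: lessThan_empty_iff)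
  then show ?thesis using sum_deg_eq_twice_num_edges[OF simple] by simp
qed

lemma adj_sym: "adj E u v = adj E v u"
  using simple unfolding simple_graph_def adj_def by metis

lemma adj_irrefl [simp]: "adj E u u = 0"
  using simple unfolding simple_graph_def adj_def by simp

definition lap :: "nat \<Rightarrow> nat \<Rightarrow> real" where
  "lap i j = (if i = j then 1 else 0) - adj E i j / sqrt (dg i * dg j)"

lemma renorm_laplacian_eq: "renorm_laplacian n E = mat n n (\<lambda>(i, j). lap i j)"
proof -
  let ?f = "\<lambda>i. 1 / sqrt (dg i)"
  have S: "deg_inv_sqrt_matrix n E = mat_diag n ?f"
    unfolding deg_inv_sqrt_matrix_def mat_diag_def by (rule cong_mat) auto
  have M: "deg_matrix n E - adj_matrix n E \<in> carrier_mat n n"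
    unfolding deg_matrix_def adj_matrix_def by auto
  have "renorm_laplacian n E
      = mat n n (\<lambda>(i, j). ?f i * (deg_matrix n E - adj_matrix n E) $$ (i, j) * ?f j)"
    unfolding renorm_laplacian_def S mat_diag_mult_left[OF M]
    by (subst mat_diag_mult_right[of _ n]) auto
  also have "\<dots> = mat n n (\<lambda>(i, j). lap i j)"
  proof (rule cong_mat)
    fix i j assume i: "i < n" and j: "j < n"
    then have "(deg_matrix n E - adj_matrix n E) $$ (i, j) = (if i = j then dg i else 0) - adj E i j"
      by (simp add: deg_matrix_def adj_matrix_def)
    with deg_pos[OF i] deg_pos[OF j]
    show "(case (i, j) of (i, j) \<Rightarrow> ?f i * (deg_matrix n E - adj_matrix n E) $$ (i, j) * ?f j)
        = (case (i, j) of (i, j) \<Rightarrow> lap i j)"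
      by (cases "i = j") (simp_all add: lap_def real_sqrt_mult field_simps)
  qed auto
  finally show ?thesis .
qed

lemma symmetric_on_lap: "symmetric_on n lap"
  unfolding symmetric_on_def lap_def using adj_sym by (simp add: mult.commute)

lemma lap_apply:
  assumes "u < n"
  shows "(\<Sum>w<n. lap u w * x w) = x u - (\<Sum>w<n. adj E u w * x w / sqrt (dg u * dg w))"
proof -
  have "(\<Sum>w<n. lap u w * x w)
      = (\<Sum>w<n. (if w = u then x u else 0) - adj E u w * x w / sqrt (dg u * dg w))"
    unfolding lap_def by (rule sum.cong) (auto simp: left_diff_distrib)
  then show ?thesis using assms by (simp add: sum_subtractf)
qed

lemma lap_form_nonneg: "0 \<le> (\<Sum>u<n. x u * (\<Sum>w<n. lap u w * x w))"
proof -
  have "0 \<le> (\<Sum>u<n. x u * (x u - (\<Sum>w<n. adj E u w * x w / sqrt (dg u * dg w))))"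
    using adj_sym deg_eq_sum_adj deg_pos
    by (intro normalized_form_nonneg) (auto simp: symmetric_on_def adj_def)
  then show ?thesis by (simp add: lap_apply)
qed

definition kernel_vec :: "nat \<Rightarrow> real" where
  "kernel_vec u = sqrt (dg u) / sqrt (2 * m)"

lemma kernel_vec_unit: "(\<Sum>u<n. kernel_vec u * kernel_vec u) = 1"
proof -
  have "(\<Sum>u<n. kernel_vec u * kernel_vec u) = (\<Sum>u<n. dg u) / (2 * m)"
    unfolding kernel_vec_def sum_divide_distrib by (rule sum.cong) auto
  then show ?thesis using num_edges_pos sum_deg_eq_twice_num_edges[OF simple] by simp
qed

lemma lap_kernel_vec: "\<forall>u<n. (\<Sum>w<n. lap u w * kernel_vec w) = 0 * kernel_vec u"
proof (intro allI impI)
  fix u assume u: "u < n"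
  have "(\<Sum>w<n. adj E u w * kernel_vec w / sqrt (dg u * dg w))
      = (\<Sum>w<n. adj E u w) / (sqrt (dg u) * sqrt (2 * m))"
    unfolding sum_divide_distrib
    using u by (intro sum.cong refl) (simp add: kernel_vec_def real_sqrt_mult deg_neq_0 field_simps)
  also have "\<dots> = dg u / sqrt (dg u) / sqrt (2 * m)" by (simp add: deg_eq_sum_adj[OF u])
  also have "\<dots> = kernel_vec u" unfolding kernel_vec_def by (subst real_div_sqrt) auto
  finally show "(\<Sum>w<n. lap u w * kernel_vec w) = 0 * kernel_vec u" by (simp add: lap_apply[OF u])
qed

lemma exists_eigenbasis: "\<exists>q mu. (\<forall>u<n. q 0 u = kernel_vec u) \<and> mu 0 = 0 \<and> eigenbasis n lap q mu"
  by (rule symmetric_eigenbasis_extends[OF symmetric_on_lap kernel_vec_unit lap_kernel_vec])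

text \<open>\<open>test_vec u v\<close> is \<open>F_uv = sqrt d_v e_u - sqrt d_u e_v\<close> and \<open>adj_image u v x\<close> is
  \<open>- sqrt d_x\<close> times the off-diagonal part of \<open>\<hat>H F_uv\<close> at \<open>x\<close>, the term squared in the
  theorem.\<close>

definition test_vec :: "nat \<Rightarrow> nat \<Rightarrow> nat \<Rightarrow> real" where
  "test_vec u v x = (if x = u then sqrt (dg v) else 0) - (if x = v then sqrt (dg u) else 0)"

definition adj_image :: "nat \<Rightarrow> nat \<Rightarrow> nat \<Rightarrow> real" where
  "adj_image u v x = adj E x v * sqrt (dg u / dg v) - adj E x u * sqrt (dg v / dg u)"

context
  fixes u v :: nat
  assumes u: "u < n" and v: "v < n" and uv: "u \<noteq> v"
begin

lemma sum_test_vec_mult: "(\<Sum>x<n. test_vec u v x * \<phi> x) = sqrt (dg v) * \<phi> u - sqrt (dg u) * \<phi> v"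
proof -
  have "(\<Sum>x<n. test_vec u v x * \<phi> x)
      = (\<Sum>x<n. (if x = u then sqrt (dg v) * \<phi> u else 0) - (if x = v then sqrt (dg u) * \<phi> v else 0))"
    unfolding test_vec_def by (rule sum.cong) auto
  then show ?thesis using u v by (simp add: sum_subtractf)
qed

lemma test_vec_norm: "(\<Sum>x<n. test_vec u v x * test_vec u v x) = dg u + dg v"
  using uv by (simp add: sum_test_vec_mult) (simp add: test_vec_def)

lemma lap_test_vec:
  assumes x: "x < n"
  shows "(\<Sum>w<n. lap x w * test_vec u v w) = test_vec u v x + adj_image u v x / sqrt (dg x)"
proof -
  have "(\<Sum>w<n. adj E x w * test_vec u v w / sqrt (dg x * dg w))
      = (\<Sum>w<n. test_vec u v w * (adj E x w / sqrt (dg x * dg w)))"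
    by (rule sum.cong) auto
  also have "\<dots> = sqrt (dg v) * (adj E x u / sqrt (dg x * dg u))
                  - sqrt (dg u) * (adj E x v / sqrt (dg x * dg v))"
    by (rule sum_test_vec_mult)
  also have "\<dots> = - adj_image u v x / sqrt (dg x)"
    using deg_pos[OF u] deg_pos[OF v] deg_pos[OF x]
    by (simp add: adj_image_def real_sqrt_mult real_sqrt_divide field_simps)
  finally show ?thesis using lap_apply[OF x] by simp
qed

lemma test_vec_adj_image: "(\<Sum>x<n. test_vec u v x * (adj_image u v x / sqrt (dg x))) = 2 * adj E u v"
proof -
  have "(\<Sum>x<n. test_vec u v x * (adj_image u v x / sqrt (dg x)))
      = sqrt (dg v) * (adj_image u v u / sqrt (dg u)) - sqrt (dg u) * (adj_image u v v / sqrt (dg v))"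
    by (rule sum_test_vec_mult)
  then show ?thesis
    using deg_pos[OF u] deg_pos[OF v] adj_sym[of u v]
    by (simp add: adj_image_def real_sqrt_divide field_simps)
qed

lemma test_vec_lap_form:
  "(\<Sum>x<n. test_vec u v x * (\<Sum>w<n. lap x w * test_vec u v w)) = dg u + dg v + 2 * adj E u v"
proof -
  have "(\<Sum>x<n. test_vec u v x * (\<Sum>w<n. lap x w * test_vec u v w))
      = (\<Sum>x<n. test_vec u v x * test_vec u v x + test_vec u v x * (adj_image u v x / sqrt (dg x)))"
    by (rule sum.cong) (auto simp: lap_test_vec distrib_left)
  then show ?thesis unfolding sum.distrib test_vec_norm test_vec_adj_image .
qed

lemma lap_test_vec_norm:
  "(\<Sum>x<n. (\<Sum>w<n. lap x w * test_vec u v w)^2)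
     = dg u + dg v + 4 * adj E u v + (\<Sum>x<n. 1 / dg x * (adj_image u v x)^2)"
proof -
  have "(\<Sum>x<n. (\<Sum>w<n. lap x w * test_vec u v w)^2)
      = (\<Sum>x<n. test_vec u v x * test_vec u v x
           + 2 * (test_vec u v x * (adj_image u v x / sqrt (dg x))) + 1 / dg x * (adj_image u v x)^2)"
  proof (rule sum.cong)
    fix x assume "x \<in> {..<n}"
    then have x: "x < n" by simp
    have "(adj_image u v x / sqrt (dg x))^2 = 1 / dg x * (adj_image u v x)^2"
      using deg_pos[OF x] by (simp add: power_divide)
    then show "(\<Sum>w<n. lap x w * test_vec u v w)^2 = test_vec u v x * test_vec u v x
           + 2 * (test_vec u v x * (adj_image u v x / sqrt (dg x))) + 1 / dg x * (adj_image u v x)^2"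
      unfolding lap_test_vec[OF x] power2_sum by (simp add: power2_eq_square)
  qed simp
  then show ?thesis
    unfolding sum.distrib test_vec_norm sum_distrib_left[symmetric] test_vec_adj_image by simp
qed

end

end

locale laplacian_eigenbasis = connected_simple_graph +
  fixes q :: "nat \<Rightarrow> nat \<Rightarrow> real" and mu :: "nat \<Rightarrow> real"
  assumes first_kernel_vec: "\<forall>u<n. q 0 u = kernel_vec u" and mu_0: "mu 0 = 0"
    and eigenbasis: "eigenbasis n lap q mu"
begin

lemma eigenvalues_sorted_renorm_laplacian:
  "eigenvalues_sorted (renorm_laplacian n E) = sort (map mu [0..<n])"
  unfolding renorm_laplacian_eq by (rule eigenvalues_sorted_eigenbasis[OF eigenbasis])

lemma eigenvalue_nonneg:
  assumes i: "i < n"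
  shows "0 \<le> mu i"
proof -
  have "(\<Sum>u<n. q i u * (\<Sum>w<n. lap u w * q i w)) = (\<Sum>u<n. mu i * (q i u * q i u))"
    using eigenbasis i by (intro sum.cong) (auto simp: eigenbasis_def)
  also have "\<dots> = mu i"
    using eigenbasis i by (simp add: eigenbasis_def orthonormal_family_def sum_distrib_left[symmetric])
  finally show ?thesis using lap_form_nonneg[of "q i"] by simp
qed

text \<open>\<open>test_coeff u v i\<close> is the coefficient of \<open>F_uv\<close> along \<open>q i\<close>.\<close>

definition test_coeff :: "nat \<Rightarrow> nat \<Rightarrow> nat \<Rightarrow> real" where
  "test_coeff u v i = sqrt (dg v) * q i u - sqrt (dg u) * q i v"

context
  fixes u v :: nat
  assumes u: "u < n" and v: "v < n" and uv: "u \<noteq> v"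
begin

lemma test_coeff_eq_inner: "test_coeff u v i = (\<Sum>x<n. q i x * test_vec u v x)"
  using sum_test_vec_mult[OF u v uv, of "q i"] by (simp add: test_coeff_def mult.commute)

lemma sum_test_coeff_sq: "(\<Sum>i<n. (test_coeff u v i)^2) = dg u + dg v"
  using parseval[of n q "test_vec u v" "test_vec u v"] eigenbasis test_vec_norm[OF u v uv]
  by (simp add: eigenbasis_def test_coeff_eq_inner power2_eq_square)

lemma sum_eigenvalue_test_coeff_sq:
  "(\<Sum>i<n. mu i * (test_coeff u v i)^2) = dg u + dg v + 2 * adj E u v"
  using eigenbasis_quadratic_forms(1)[OF symmetric_on_lap eigenbasis, of "test_vec u v"]
  by (simp add: test_vec_lap_form[OF u v uv] test_coeff_eq_inner)

lemma sum_eigenvalue_sq_test_coeff_sq: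
  "(\<Sum>i<n. (mu i)^2 * (test_coeff u v i)^2)
     = dg u + dg v + 4 * adj E u v + (\<Sum>x<n. 1 / dg x * (adj_image u v x)^2)"
  using eigenbasis_quadratic_forms(2)[OF symmetric_on_lap eigenbasis, of "test_vec u v"]
  by (simp add: lap_test_vec_norm[OF u v uv] test_coeff_eq_inner)

end

lemma test_coeff_0:
  assumes "u < n" "v < n"
  shows "test_coeff u v 0 = 0"
  using assms first_kernel_vec by (simp add: test_coeff_def kernel_vec_def)

lemma sum_test_coeff_sq_le:
  assumes M: "M \<subseteq> {..<n} \<times> {..<n}" and i: "i < n"
  shows "(\<Sum>(u, v)\<in>M. (test_coeff u v i)^2) \<le> 4 * m"
proof -
  have "(\<Sum>(u, v)\<in>M. (test_coeff u v i)^2) \<le> (\<Sum>(u, v)\<in>{..<n} \<times> {..<n}. (test_coeff u v i)^2)"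
    using M by (intro sum_mono2) auto
  also have "\<dots> = (\<Sum>u<n. \<Sum>v<n. (test_coeff u v i)^2)" by (simp add: sum.cartesian_product)
  also have "\<dots> = 2 * (2 * m) * 1 - 2 * (\<Sum>u<n. sqrt (dg u) * q i u)^2"
    using sum_sq_cross_diff[of n dg "q i"] sum_deg_eq_twice_num_edges[OF simple] eigenbasis i
    by (simp add: test_coeff_def eigenbasis_def orthonormal_family_def power2_eq_square)
  also have "\<dots> \<le> 4 * m" by simp
  finally show ?thesis .
qed

definition pair_weight :: "(nat \<times> nat) set \<Rightarrow> nat \<Rightarrow> real" where
  "pair_weight M i = (\<Sum>(u, v)\<in>M. (test_coeff u v i)^2) / (4 * m)"

lemma pair_weight_0:
  assumes "M \<subseteq> {..<n} \<times> {..<n}"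
  shows "pair_weight M 0 = 0"
  using assms by (auto simp: pair_weight_def test_coeff_0 intro!: sum.neutral)

lemma pair_weight_bounds:
  assumes "M \<subseteq> {..<n} \<times> {..<n}" and "i < n"
  shows "0 \<le> pair_weight M i \<and> pair_weight M i \<le> 1"
  using sum_test_coeff_sq_le[OF assms] num_edges_pos
  by (auto simp: pair_weight_def split_def intro!: sum_nonneg divide_nonneg_pos)

lemma sum_mult_pair_weight:
  "(\<Sum>i<n. g i * pair_weight M i) = (\<Sum>(u, v)\<in>M. \<Sum>i<n. g i * (test_coeff u v i)^2) / (4 * m)"
  unfolding pair_weight_def sum_divide_distrib[symmetric] times_divide_eq_right sum_distrib_left
  by (subst sum.swap) (simp add: split_def)

context
  fixes M :: "(nat \<times> nat) set"
  assumes M: "M \<subseteq> {(u, v). u < n \<and> v < n \<and> u \<noteq> v}"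
begin

lemma sum_pair_weight: "(\<Sum>i<n. pair_weight M i) = (\<Sum>(u, v)\<in>M. dg u + dg v) / (4 * m)"
proof -
  have "(\<Sum>(u, v)\<in>M. \<Sum>i<n. 1 * (test_coeff u v i)^2) = (\<Sum>(u, v)\<in>M. dg u + dg v)"
    using M by (intro sum.cong refl) (auto simp: sum_test_coeff_sq)
  then show ?thesis using sum_mult_pair_weight[of "\<lambda>_. 1" M] by simp
qed

lemma sum_eigenvalue_pair_weight:
  "(\<Sum>i<n. mu i * pair_weight M i) = 1 / (4 * m) * (\<Sum>(u, v)\<in>M. dg u + dg v + 2 * adj E u v)"
proof -
  have "(\<Sum>(u, v)\<in>M. \<Sum>i<n. mu i * (test_coeff u v i)^2) = (\<Sum>(u, v)\<in>M. dg u + dg v + 2 * adj E u v)"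
    using M by (intro sum.cong refl) (auto simp: sum_eigenvalue_test_coeff_sq)
  then show ?thesis by (simp add: sum_mult_pair_weight)
qed

lemma sum_eigenvalue_sq_pair_weight:
  "(\<Sum>i<n. (mu i)^2 * pair_weight M i) = 1 / (4 * m) * (\<Sum>(u, v)\<in>M. dg u + dg v + 4 * adj E u v
      + (\<Sum>x<n. 1 / dg x * (adj E x v * sqrt (dg u / dg v) - adj E x u * sqrt (dg v / dg u))^2))"
proof -
  have "(\<Sum>(u, v)\<in>M. \<Sum>i<n. (mu i)^2 * (test_coeff u v i)^2) = (\<Sum>(u, v)\<in>M. dg u + dg v + 4 * adj E u v
      + (\<Sum>x<n. 1 / dg x * (adj E x v * sqrt (dg u / dg v) - adj E x u * sqrt (dg v / dg u))^2))"
    using M by (intro sum.cong refl) (auto simp: sum_eigenvalue_sq_test_coeff_sq adj_image_def)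
  then show ?thesis by (simp add: sum_mult_pair_weight)
qed

end

end

theorem mainTheorem6:
  fixes n k :: nat and E :: "nat \<Rightarrow> nat \<Rightarrow> bool" and M0 :: "(nat \<times> nat) set"
  assumes "simple_graph n E" and "connected_graph n E" and "n \<ge> 2"
    and "k \<ge> 1"
    and "M0 \<subseteq> {(u, v). u < n \<and> v < n \<and> u \<noteq> v}"
    and "(\<Sum>(u, v)\<in>M0. real (deg n E u) + real (deg n E v))
           \<ge> 4 * (real k - 1) * real (num_edges n E)"
  shows "((\<Sum>j=1..k-1. eigenvalues_sorted (renorm_laplacian n E) ! j)
           \<le> 1 / (4 * real (num_edges n E)) *
             (\<Sum>(u, v)\<in>M0. real (deg n E u) + real (deg n E v) + 2 * adj E u v)) \<and>
       ((\<Sum>j=1..k-1. (eigenvalues_sorted (renorm_laplacian n E) ! j)^2)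
           \<le> 1 / (4 * real (num_edges n E)) *
             (\<Sum>(u, v)\<in>M0. real (deg n E u) + real (deg n E v) + 4 * adj E u v
                + (\<Sum>x<n. 1 / real (deg n E x) *
                     (adj E x v * sqrt (real (deg n E u) / real (deg n E v))
                      - adj E x u * sqrt (real (deg n E v) / real (deg n E u)))^2)))"
proof -
  interpret connected_simple_graph n E using assms(1-3) by unfold_locales
  obtain q mu where "laplacian_eigenbasis n E q mu"
    using exists_eigenbasis by (auto intro: laplacian_eigenbasis_axioms.intro
        laplacian_eigenbasis.intro connected_simple_graph_axioms)
  then interpret laplacian_eigenbasis n E q mu .
  have M0: "M0 \<subseteq> {..<n} \<times> {..<n}" using assms(5) by auto
  have "real (k - 1) * (4 * real (num_edges n E)) \<le> (\<Sum>(u, v)\<in>M0. real (deg n E u) + real (deg n E v))"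
    using assms(4,6) by (simp add: of_nat_diff algebra_simps)
  then have weight_sum: "real (k - 1) \<le> (\<Sum>i<n. pair_weight M0 i)"
    using num_edges_pos by (simp add: sum_pair_weight[OF assms(5)] pos_le_divide_eq)
  have bound: "(\<Sum>j=1..k-1. f (sort (map mu [0..<n]) ! j)) \<le> (\<Sum>i<n. f (mu i) * pair_weight M0 i)"
    if "\<And>x y. 0 \<le> x \<Longrightarrow> x \<le> y \<Longrightarrow> f x \<le> f y" "\<And>x. 0 \<le> x \<Longrightarrow> 0 \<le> f x" for f
    by (rule sum_sorted_tail_le_weighted_sum)
      (use two_le_n eigenvalue_nonneg pair_weight_bounds[OF M0] weight_sum that in
        \<open>auto simp: mu_0 pair_weight_0[OF M0]\<close>)
  have "(\<Sum>j=1..k-1. sort (map mu [0..<n]) ! j) \<le> (\<Sum>i<n. mu i * pair_weight M0 i)"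
    using bound[of "\<lambda>x. x"] by simp
  moreover have "(\<Sum>j=1..k-1. (sort (map mu [0..<n]) ! j)^2) \<le> (\<Sum>i<n. (mu i)^2 * pair_weight M0 i)"
    using bound[of "\<lambda>x. x^2"] by (simp add: power_mono)
  ultimately show ?thesis
    by (simp add: eigenvalues_sorted_renorm_laplacian sum_eigenvalue_pair_weight[OF assms(5)]
        sum_eigenvalue_sq_pair_weight[OF assms(5)])
qed

end
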